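(* Let $f:\mathbb{R}^n\to\mathbb{R}$ be continuously differentiable and bounded below with $\nabla f$ Lipschitz continuous on $\mathbb{R}^n$, let $s$ be an integer with $0<s<n$, and let $\{\mathbf{x}^k\}$ be the sequence generated by the partial sparse-simplex method. Then for any $k$ with $\|\mathbf{x}^k\|_0<s$, $$f(\mathbf{x}^k)-f(\mathbf{x}^{k+1})\ge\frac{1}{2L_2(f)}\max_{i=1,\dots,n}(\nabla_i f(\mathbf{x}^k))^2,$$ and for any $k$ with $\|\mathbf{x}^k\|_0=s$, $f(\mathbf{x}^k)-f(\mathbf{x}^{k+1})\ge A(\mathbf{x}^k)$, where $$A(\mathbf{x})=\max\Big\{\frac{1}{2L_2(f)}\max_{i\in I_1(\mathbf{x})}(\nabla_i f(\mathbf{x}))^2,\ M_s(\mathbf{x})\Big[\max_{i\in I_0(\mathbf{x})}|\nabla_i f(\mathbf{x})|-\max_{i\in I_1(\mathbf{x})}|\nabla_i f(\mathbf{x})|-L_2(f)M_s(\mathbf{x})\Big]\Big\}.$$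
   Context: $\|\mathbf{x}\|_0$ is the number of nonzero components, $C_s=\{\mathbf{x}:\|\mathbf{x}\|_0\le s\}$, $I_1(\mathbf{x})=\{i:x_i\neq0\}$, $I_0(\mathbf{x})=\{i:x_i=0\}$, $M_s(\mathbf{x})$ the $s$-th largest absolute value among components of $\mathbf{x}$, $\mathbf{e}_i$ the $i$-th standard basis vector. For $i\neq j$, $\nabla_{i,j}f(\mathbf{x})\in\mathbb{R}^2$ is the vector of the $i$-th and $j$-th partial derivatives, $L_{i,j}(f)$ is a constant with $\|\nabla_{i,j}f(\mathbf{x})-\nabla_{i,j}f(\mathbf{x}+\mathbf{d})\|\le L_{i,j}(f)\|\mathbf{d}\|$ for all $\mathbf{x}$ and all $\mathbf{d}$ with at most two nonzero components, and $L_2(f)=\max_{i\neq j}L_{i,j}(f)$. Partial sparse-simplex method (all one-dimensional minima assumed attained): choose $\mathbf{x}^0\in C_s$. At step $k$: if $\|\mathbf{x}^k\|_0<s$, for each $i$ let $t_i\in\operatorname{argmin}_t f(\mathbf{x}^k+t\mathbf{e}_i)$, $f_i=\min_t f(\mathbf{x}^k+t\mathbf{e}_i)$, $i_k\in\operatorname{argmin}_i f_i$; if $f_{i_k}<f(\mathbf{x}^k)$ set $\mathbf{x}^{k+1}=\mathbf{x}^k+t_{i_k}\mathbf{e}_{i_k}$, else stop. If $\|\mathbf{x}^k\|_0=s$: for $i\in I_1(\mathbf{x}^k)$ let $f_i=\min_t f(\mathbf{x}^k+t\mathbf{e}_i)$; let $i_k^1\in\operatorname{argmin}\{f_i:i\in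 I_1(\mathbf{x}^k)\}$, $i_k^2\in\operatorname{argmax}\{|\nabla_i f(\mathbf{x}^k)|:i\in I_0(\mathbf{x}^k)\}$, $m_k\in\operatorname{argmin}\{|x_i^k|:i\in I_1(\mathbf{x}^k)\}$; let $D_k^1=\min_t f(\mathbf{x}^k+t\mathbf{e}_{i_k^1})$ with minimizer $T_k^1$, and $D_k^2=\min_t f(\mathbf{x}^k-x^k_{m_k}\mathbf{e}_{m_k}+t\mathbf{e}_{i_k^2})$ with minimizer $T_k^2$; if $D_k^1<D_k^2$ set $\mathbf{x}^{k+1}=\mathbf{x}^k+T_k^1\mathbf{e}_{i_k^1}$, else $\mathbf{x}^{k+1}=\mathbf{x}^k-x^k_{m_k}\mathbf{e}_{m_k}+T_k^2\mathbf{e}_{i_k^2}$. *)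

theory Defs
  imports "HOL-Analysis.Analysis" "HOL-Library.Multiset"
begin

definition l0norm :: "real^'n \<Rightarrow> nat" where
  "l0norm x = card {i. x $ i \<noteq> 0}"

definition I1 :: "real^'n \<Rightarrow> 'n set" where
  "I1 x = {i. x $ i \<noteq> 0}"

definition I0 :: "real^'n \<Rightarrow> 'n set" where
  "I0 x = {i. x $ i = 0}"

text \<open>M_s(x): the s-th largest absolute value among the components of x (s >= 1).\<close>
definition Ms :: "nat \<Rightarrow> real^'n \<Rightarrow> real" where
  "Ms s x = rev (sorted_list_of_multiset (image_mset (\<lambda>i. \<bar>x $ i\<bar>) (mset_set UNIV))) ! (s - 1)"

definition block_lipschitz :: "(real^'n \<Rightarrow> real^'n) \<Rightarrow> 'n \<Rightarrow> 'n \<Rightarrow> real \<Rightarrow> bool" where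
  "block_lipschitz G i j L \<longleftrightarrow>
     (\<forall>x d. card {l. d $ l \<noteq> 0} \<le> 2 \<longrightarrow>
        sqrt ((G x $ i - G (x + d) $ i)\<^sup>2 + (G x $ j - G (x + d) $ j)\<^sup>2) \<le> L * norm d)"

text \<open>One step of the partial sparse-simplex method from x to x' (G is the gradient of f).
  A step exists only when the method does not stop.\<close>
definition pss_step :: "(real^'n \<Rightarrow> real) \<Rightarrow> (real^'n \<Rightarrow> real^'n) \<Rightarrow> nat \<Rightarrow> real^'n \<Rightarrow> real^'n \<Rightarrow> bool" where
  "pss_step f G s x x' \<longleftrightarrow>
    (l0norm x < s \<and>
      (\<exists>i t. (\<forall>j u. f (x + t *\<^sub>R axis i 1) \<le> f (x + u *\<^sub>R axis j 1))
          \<and> f (x + t *\<^sub>R axis i 1) < f x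
          \<and> x' = x + t *\<^sub>R axis i 1))
    \<or>
    (l0norm x = s \<and>
      (\<exists>i1 T1 i2 m T2.
          i1 \<in> I1 x \<and> (\<forall>j\<in>I1 x. \<forall>u. f (x + T1 *\<^sub>R axis i1 1) \<le> f (x + u *\<^sub>R axis j 1))
        \<and> i2 \<in> I0 x \<and> (\<forall>j\<in>I0 x. \<bar>G x $ j\<bar> \<le> \<bar>G x $ i2\<bar>)
        \<and> m \<in> I1 x \<and> (\<forall>j\<in>I1 x. \<bar>x $ m\<bar> \<le> \<bar>x $ j\<bar>)
        \<and> (\<forall>u. f (x - (x $ m) *\<^sub>R axis m 1 + T2 *\<^sub>R axis i2 1)
               \<le> f (x - (x $ m) *\<^sub>R axis m 1 + u *\<^sub>R axis i2 1))
        \<and> x' = (if f (x + T1 *\<^sub>R axis i1 1) < f (x - (x $ m) *\<^sub>R axis m 1 + T2 *\<^sub>R axis i2 1)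
               then x + T1 *\<^sub>R axis i1 1
               else x - (x $ m) *\<^sub>R axis m 1 + T2 *\<^sub>R axis i2 1)))"

end

theory Submission
  imports Defs
begin

text \<open>Both bounds come from the block descent lemma
  \<open>f (x + d) \<le> f x + \<nabla>f(x) \<bullet> d + L\<^sub>2/2 \<parallel>d\<parallel>\<^sup>2\<close> for directions \<open>d\<close> supported on two coordinates.
  Below the sparsity level the method takes the best coordinate minimisation, which is at least
  as good as the gradient step \<open>-\<nabla>\<^sub>if(x)/L\<^sub>2\<close> along the best coordinate. At the sparsity level it
  takes the better of a coordinate minimisation on the support and an optimised swap; the former
  dominates the gradient step on the support, the latter dominates the swap that zeroes the
  smallest entry \<open>x\<^sub>m\<close> (of modulus \<open>M\<^sub>s(x)\<close>) and moves by \<open>\<mp>M\<^sub>s(x)\<close> along the zero coordinate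
  with the largest partial derivative.\<close>

lemma mult_add_mult_le_sqrt_mult_sqrt:
  fixes p q u v :: real
  shows "p * u + q * v \<le> sqrt (p\<^sup>2 + q\<^sup>2) * sqrt (u\<^sup>2 + v\<^sup>2)"
proof -
  have "(p * u + q * v)\<^sup>2 \<le> (p\<^sup>2 + q\<^sup>2) * (u\<^sup>2 + v\<^sup>2)"
    using sum_squares_ge_zero[of "p * v - q * u" 0] by (simp add: power2_eq_square algebra_simps)
  hence "sqrt ((p * u + q * v)\<^sup>2) \<le> sqrt ((p\<^sup>2 + q\<^sup>2) * (u\<^sup>2 + v\<^sup>2))"
    using real_sqrt_le_mono by blast
  thus ?thesis by (simp add: real_sqrt_mult)
qed

lemma inner_two_axis:
  fixes y :: "real^'n"
  assumes "a \<noteq> b"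
  shows "y \<bullet> (p *\<^sub>R axis a 1 + q *\<^sub>R axis b 1) = p * y $ a + q * y $ b"
  by (simp add: inner_add_right inner_axis)

lemma norm_two_axis:
  assumes "a \<noteq> b"
  shows "norm (p *\<^sub>R axis a 1 + q *\<^sub>R axis b 1 :: real^'n) = sqrt (p\<^sup>2 + q\<^sup>2)"
  using assms
  by (simp add: norm_eq_sqrt_inner inner_add_left inner_add_right inner_axis_axis power2_eq_square)

lemma card_support_two_axis_le:
  assumes "a \<noteq> b"
  shows "card {l. (p *\<^sub>R axis a 1 + q *\<^sub>R axis b 1 :: real^'n) $ l \<noteq> 0} \<le> 2"
proof -
  have "card {l. (p *\<^sub>R axis a 1 + q *\<^sub>R axis b 1 :: real^'n) $ l \<noteq> 0} \<le> card {a, b}"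
    by (intro card_mono) (auto simp: axis_def)
  thus ?thesis using assms by simp
qed

lemma block_lipschitz_directional_derivative_le:
  fixes G :: "real^'n \<Rightarrow> real^'n"
  assumes bl: "block_lipschitz G a b L" and ab: "a \<noteq> b" and t: "0 \<le> t"
    and d: "d = p *\<^sub>R axis a 1 + q *\<^sub>R axis b 1"
  shows "G (x + t *\<^sub>R d) \<bullet> d - G x \<bullet> d \<le> L * t * (p\<^sup>2 + q\<^sup>2)"
proof -
  define \<delta>a where "\<delta>a = G (x + t *\<^sub>R d) $ a - G x $ a"
  define \<delta>b where "\<delta>b = G (x + t *\<^sub>R d) $ b - G x $ b"
  have "card {l. (t *\<^sub>R d) $ l \<noteq> 0} \<le> 2"
    using card_support_two_axis_le[OF ab, of "t * p" "t * q"] by (simp add: d scaleR_add_right)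
  with bl have lip: "sqrt (\<delta>a\<^sup>2 + \<delta>b\<^sup>2) \<le> L * (t * sqrt (p\<^sup>2 + q\<^sup>2))"
    using norm_two_axis[OF ab] t
    unfolding block_lipschitz_def \<delta>a_def \<delta>b_def by (fastforce simp: d power2_commute)
  have "G (x + t *\<^sub>R d) \<bullet> d - G x \<bullet> d = \<delta>a * p + \<delta>b * q"
    using inner_two_axis[OF ab] by (simp add: d \<delta>a_def \<delta>b_def algebra_simps)
  also have "\<dots> \<le> sqrt (\<delta>a\<^sup>2 + \<delta>b\<^sup>2) * sqrt (p\<^sup>2 + q\<^sup>2)"
    by (rule mult_add_mult_le_sqrt_mult_sqrt)
  also have "\<dots> \<le> L * (t * sqrt (p\<^sup>2 + q\<^sup>2)) * sqrt (p\<^sup>2 + q\<^sup>2)"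
    using lip by (rule mult_right_mono) simp
  also have "\<dots> = L * t * (p\<^sup>2 + q\<^sup>2)"
    by (simp add: mult.assoc)
  finally show ?thesis .
qed

lemma block_lipschitz_descent:
  fixes f :: "real^'n \<Rightarrow> real" and G :: "real^'n \<Rightarrow> real^'n"
  assumes grad: "\<And>y. (f has_derivative (\<lambda>h. G y \<bullet> h)) (at y)"
    and bl: "block_lipschitz G a b L" and ab: "a \<noteq> b"
  shows "f (x + p *\<^sub>R axis a 1 + q *\<^sub>R axis b 1)
           \<le> f x + p * G x $ a + q * G x $ b + L / 2 * (p\<^sup>2 + q\<^sup>2)"
proof -
  define d :: "real^'n" where "d = p *\<^sub>R axis a 1 + q *\<^sub>R axis b 1"
  define h where "h t = f (x + t *\<^sub>R d) - t * (G x \<bullet> d) - L / 2 * t\<^sup>2 * (p\<^sup>2 + q\<^sup>2)" for t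
  define h' where "h' t = G (x + t *\<^sub>R d) \<bullet> d - G x \<bullet> d - L * t * (p\<^sup>2 + q\<^sup>2)" for t
  have "(h has_real_derivative h' t) (at t)" for t
  proof -
    have "((\<lambda>t. x + t *\<^sub>R d) has_derivative (\<lambda>h. h *\<^sub>R d)) (at t)"
      by (auto intro!: derivative_eq_intros)
    from has_derivative_compose[OF this grad]
    have "((\<lambda>t. f (x + t *\<^sub>R d)) has_derivative (\<lambda>h. G (x + t *\<^sub>R d) \<bullet> (h *\<^sub>R d))) (at t)"
      by (simp add: o_def)
    hence "((\<lambda>t. f (x + t *\<^sub>R d)) has_real_derivative (G (x + t *\<^sub>R d) \<bullet> d)) (at t)"
      unfolding has_field_derivative_def by (simp add: mult.commute[of _ "G (x + t *\<^sub>R d) \<bullet> d"])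
    thus ?thesis unfolding h_def h'_def
      by (auto intro!: derivative_eq_intros simp: power2_eq_square)
  qed
  then obtain z where "0 < z" "h 1 - h 0 = h' z"
    using MVT2[of 0 1 h h'] by auto
  moreover have "h' z \<le> 0" if "0 \<le> z" for z
    using block_lipschitz_directional_derivative_le[OF bl ab that d_def] by (simp add: h'_def)
  ultimately have "h 1 \<le> h 0" by (metis diff_le_0_iff_le less_imp_le)
  thus ?thesis unfolding h_def using inner_two_axis[OF ab, of "G x" p q]
    by (simp add: d_def add.assoc)
qed

lemma coordinate_gradient_step_decrease:
  fixes f :: "real^'n \<Rightarrow> real" and G :: "real^'n \<Rightarrow> real^'n"
  assumes grad: "\<And>y. (f has_derivative (\<lambda>h. G y \<bullet> h)) (at y)"
    and bl: "\<And>i j. i \<noteq> j \<Longrightarrow> block_lipschitz G i j L" and card: "2 \<le> CARD('n)"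
  shows "\<exists>u. f (y + u *\<^sub>R axis j 1) \<le> f y - 1 / (2 * L) * (G y $ j)\<^sup>2"
proof (cases "L = 0")
  case True
  thus ?thesis by (intro exI[of _ 0]) simp
next
  case False
  obtain b :: 'n where b: "j \<noteq> b"
    using card by (metis UNIV_I card_le_Suc0_iff_eq finite not_less_eq_eq numeral_2_eq_2)
  define u where "u = - G y $ j / L"
  have "f (y + u *\<^sub>R axis j 1) \<le> f y + u * G y $ j + L / 2 * u\<^sup>2"
    using block_lipschitz_descent[OF grad bl[OF b] b, of y u 0] by simp
  also have "\<dots> = f y - 1 / (2 * L) * (G y $ j)\<^sup>2"
    using False by (simp add: u_def power2_eq_square field_simps)
  finally show ?thesis by blast
qed

lemma swap_step_decrease:
  fixes f :: "real^'n \<Rightarrow> real" and G :: "real^'n \<Rightarrow> real^'n"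
  assumes grad: "\<And>y. (f has_derivative (\<lambda>h. G y \<bullet> h)) (at y)"
    and bl: "block_lipschitz G m i L" and mi: "m \<noteq> i"
  shows "\<exists>u. f (y - (y $ m) *\<^sub>R axis m 1 + u *\<^sub>R axis i 1)
               \<le> f y - \<bar>y $ m\<bar> * (\<bar>G y $ i\<bar> - \<bar>G y $ m\<bar> - L * \<bar>y $ m\<bar>)"
proof
  define u where "u = (if G y $ i \<ge> 0 then - \<bar>y $ m\<bar> else \<bar>y $ m\<bar>)"
  have "f (y - (y $ m) *\<^sub>R axis m 1 + u *\<^sub>R axis i 1)
          \<le> f y - y $ m * G y $ m + u * G y $ i + L / 2 * ((y $ m)\<^sup>2 + u\<^sup>2)"
    using block_lipschitz_descent[OF grad bl mi, of y "- y $ m" u] by simp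
  moreover have "u * G y $ i = - (\<bar>y $ m\<bar> * \<bar>G y $ i\<bar>)"
    by (auto simp: u_def)
  moreover have "L / 2 * ((y $ m)\<^sup>2 + u\<^sup>2) = L * \<bar>y $ m\<bar> * \<bar>y $ m\<bar>"
    by (simp add: u_def power2_eq_square)
  moreover have "- (y $ m * G y $ m) \<le> \<bar>y $ m\<bar> * \<bar>G y $ m\<bar>"
    by (metis abs_ge_minus_self abs_mult)
  ultimately show "f (y - (y $ m) *\<^sub>R axis m 1 + u *\<^sub>R axis i 1)
               \<le> f y - \<bar>y $ m\<bar> * (\<bar>G y $ i\<bar> - \<bar>G y $ m\<bar> - L * \<bar>y $ m\<bar>)"
    by (simp add: algebra_simps)
qed

lemma sorted_nth_eq_if_count_less_le:
  fixes xs :: "real list"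
  assumes srt: "sorted xs" and i: "i < length xs"
    and less: "length (filter (\<lambda>y. y < c) xs) \<le> i"
    and le: "i < length (filter (\<lambda>y. y \<le> c) xs)"
  shows "xs ! i = c"
proof (rule linorder_cases[of "xs ! i" c])
  assume lt: "xs ! i < c"
  have "{0..i} \<subseteq> {j. j < length xs \<and> xs ! j < c}"
    using sorted_nth_mono[OF srt _ i] lt i by fastforce
  hence "card {0..i} \<le> card {j. j < length xs \<and> xs ! j < c}"
    by (intro card_mono) auto
  thus "xs ! i = c" using less by (simp add: length_filter_conv_card)
next
  assume gt: "c < xs ! i"
  have "{j. j < length xs \<and> xs ! j \<le> c} \<subseteq> {0..<i}"
    using sorted_nth_mono[OF srt] gt by (fastforce simp: not_less[symmetric])
  hence "card {j. j < length xs \<and> xs ! j \<le> c} \<le> card {0..<i}"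
    by (intro card_mono) auto
  thus "xs ! i = c" using le by (simp add: length_filter_conv_card)
qed

lemma length_filter_sorted_abs_components:
  fixes x :: "real^'n"
  shows "length (filter P (sorted_list_of_multiset (image_mset (\<lambda>i. \<bar>x $ i\<bar>) (mset_set UNIV))))
       = card {i. P \<bar>x $ i\<bar>}"
proof -
  have "length (filter P (sorted_list_of_multiset (image_mset (\<lambda>i. \<bar>x $ i\<bar>) (mset_set UNIV))))
      = size (mset (filter P (sorted_list_of_multiset (image_mset (\<lambda>i. \<bar>x $ i\<bar>) (mset_set UNIV)))))"
    by (simp only: size_mset)
  also have "\<dots> = card {i. P \<bar>x $ i\<bar>}"
    by (simp add: filter_mset_image_mset)
  finally show ?thesis .
qed

text \<open>With exactly \<open>s\<close> nonzero entries, the \<open>s\<close>-th largest modulus sits at position \<open>n - s\<close> of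
  the ascending list; exactly \<open>n - s\<close> entries (the zeros) lie strictly below \<open>\<bar>x\<^sub>m\<bar>\<close>.\<close>
lemma Ms_eq_min_abs_on_support:
  fixes x :: "real^'n"
  assumes l0: "l0norm x = s" and s: "0 < s" and m: "m \<in> I1 x"
    and m_min: "\<forall>j\<in>I1 x. \<bar>x $ m\<bar> \<le> \<bar>x $ j\<bar>"
  shows "Ms s x = \<bar>x $ m\<bar>"
proof -
  define xs where "xs = sorted_list_of_multiset (image_mset (\<lambda>i. \<bar>x $ i\<bar>) (mset_set (UNIV :: 'n set)))"
  have len: "length xs = CARD('n)"
    unfolding xs_def by (metis size_mset mset_sorted_list_of_multiset size_image_mset size_mset_set)
  have card_I1: "card {i. x $ i \<noteq> 0} = s"
    using l0 by (simp add: l0norm_def)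
  have s_le: "s \<le> CARD('n)"
    using card_I1 by (metis card_mono finite subset_UNIV)
  have card_I0: "card {i. x $ i = 0} = CARD('n) - s"
  proof -
    have "{i. x $ i = 0} = UNIV - {i. x $ i \<noteq> 0}" by auto
    thus ?thesis using card_I1 by (simp add: card_Diff_subset)
  qed
  have xm: "x $ m \<noteq> 0" using m by (simp add: I1_def)
  have "{i. \<bar>x $ i\<bar> < \<bar>x $ m\<bar>} = {i. x $ i = 0}"
    using m_min xm by (force simp: I1_def)
  hence less: "length (filter (\<lambda>y. y < \<bar>x $ m\<bar>) xs) = CARD('n) - s"
    unfolding xs_def length_filter_sorted_abs_components using card_I0 by simp
  have "Suc (CARD('n) - s) = card (insert m {i. x $ i = 0})"
    using card_I0 xm by simp
  also have "\<dots> \<le> card {i. \<bar>x $ i\<bar> \<le> \<bar>x $ m\<bar>}"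
    by (intro card_mono) auto
  finally have le: "CARD('n) - s < length (filter (\<lambda>y. y \<le> \<bar>x $ m\<bar>) xs)"
    unfolding xs_def length_filter_sorted_abs_components by simp
  have "Ms s x = rev xs ! (s - 1)"
    unfolding Ms_def xs_def by simp
  also have "\<dots> = xs ! (CARD('n) - s)"
    using s s_le len by (simp add: rev_nth Suc_diff_Suc)
  also have "\<dots> = \<bar>x $ m\<bar>"
    using sorted_nth_eq_if_count_less_le[of xs "CARD('n) - s" "\<bar>x $ m\<bar>"] less le len s s_le
    unfolding xs_def by simp
  finally show ?thesis .
qed

lemma pss_step_decrease_below_sparsity:
  fixes f :: "real^'n \<Rightarrow> real" and G :: "real^'n \<Rightarrow> real^'n"
  assumes grad: "\<And>y. (f has_derivative (\<lambda>h. G y \<bullet> h)) (at y)"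
    and bl: "\<And>i j. i \<noteq> j \<Longrightarrow> block_lipschitz G i j L" and card: "2 \<le> CARD('n)"
    and step: "pss_step f G s y y'" and below: "l0norm y < s"
  shows "f y - f y' \<ge> 1 / (2 * L) * (MAX i\<in>UNIV. (G y $ i)\<^sup>2)"
proof -
  obtain i t where best: "\<forall>j u. f (y + t *\<^sub>R axis i 1) \<le> f (y + u *\<^sub>R axis j 1)"
      and y': "y' = y + t *\<^sub>R axis i 1"
    using step below unfolding pss_step_def by (elim disjE conjE exE) (blast, simp)
  have "(MAX i\<in>UNIV. (G y $ i)\<^sup>2) \<in> (\<lambda>i. (G y $ i)\<^sup>2) ` UNIV"
    by (rule Max_in) auto
  then obtain j where j: "(MAX i\<in>UNIV. (G y $ i)\<^sup>2) = (G y $ j)\<^sup>2"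
    by blast
  obtain u where "f (y + u *\<^sub>R axis j 1) \<le> f y - 1 / (2 * L) * (G y $ j)\<^sup>2"
    using coordinate_gradient_step_decrease[OF grad bl card] by blast
  moreover have "f y' \<le> f (y + u *\<^sub>R axis j 1)"
    using best y' by blast
  ultimately show ?thesis unfolding j by linarith
qed

lemma pss_step_decrease_at_sparsity:
  fixes f :: "real^'n \<Rightarrow> real" and G :: "real^'n \<Rightarrow> real^'n"
  assumes grad: "\<And>y. (f has_derivative (\<lambda>h. G y \<bullet> h)) (at y)"
    and bl: "\<And>i j. i \<noteq> j \<Longrightarrow> block_lipschitz G i j L" and card: "2 \<le> CARD('n)"
    and s: "0 < s" and step: "pss_step f G s y y'" and at: "l0norm y = s"
  shows "f y - f y' \<ge>
           max (1 / (2 * L) * (MAX i\<in>I1 y. (G y $ i)\<^sup>2))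
               (Ms s y * ((MAX i\<in>I0 y. \<bar>G y $ i\<bar>) - (MAX i\<in>I1 y. \<bar>G y $ i\<bar>) - L * Ms s y))"
proof -
  obtain i1 T1 i2 m T2 where
      best1: "\<forall>j\<in>I1 y. \<forall>u. f (y + T1 *\<^sub>R axis i1 1) \<le> f (y + u *\<^sub>R axis j 1)"
      and i2: "i2 \<in> I0 y" and i2_max: "\<forall>j\<in>I0 y. \<bar>G y $ j\<bar> \<le> \<bar>G y $ i2\<bar>"
      and m: "m \<in> I1 y" and m_min: "\<forall>j\<in>I1 y. \<bar>y $ m\<bar> \<le> \<bar>y $ j\<bar>"
      and best2: "\<forall>u. f (y - (y $ m) *\<^sub>R axis m 1 + T2 *\<^sub>R axis i2 1)
                     \<le> f (y - (y $ m) *\<^sub>R axis m 1 + u *\<^sub>R axis i2 1)"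
      and y': "y' = (if f (y + T1 *\<^sub>R axis i1 1) < f (y - (y $ m) *\<^sub>R axis m 1 + T2 *\<^sub>R axis i2 1)
                     then y + T1 *\<^sub>R axis i1 1
                     else y - (y $ m) *\<^sub>R axis m 1 + T2 *\<^sub>R axis i2 1)"
    using step at s unfolding pss_step_def by (elim disjE conjE exE) (simp, blast)
  have y'_le1: "f y' \<le> f (y + T1 *\<^sub>R axis i1 1)"
    and y'_le2: "f y' \<le> f (y - (y $ m) *\<^sub>R axis m 1 + T2 *\<^sub>R axis i2 1)"
    using y' by auto
  have "f y - f y' \<ge> 1 / (2 * L) * (MAX i\<in>I1 y. (G y $ i)\<^sup>2)"
  proof -
    have "(MAX i\<in>I1 y. (G y $ i)\<^sup>2) \<in> (\<lambda>i. (G y $ i)\<^sup>2) ` I1 y"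
      using m by (intro Max_in) auto
    then obtain j where "j \<in> I1 y" and j: "(MAX i\<in>I1 y. (G y $ i)\<^sup>2) = (G y $ j)\<^sup>2"
      by blast
    obtain u where "f (y + u *\<^sub>R axis j 1) \<le> f y - 1 / (2 * L) * (G y $ j)\<^sup>2"
      using coordinate_gradient_step_decrease[OF grad bl card] by blast
    moreover have "f y' \<le> f (y + u *\<^sub>R axis j 1)"
      using best1 \<open>j \<in> I1 y\<close> y'_le1 order_trans by blast
    ultimately show ?thesis unfolding j by linarith
  qed
  moreover have "f y - f y' \<ge>
      Ms s y * ((MAX i\<in>I0 y. \<bar>G y $ i\<bar>) - (MAX i\<in>I1 y. \<bar>G y $ i\<bar>) - L * Ms s y)"
  proof -
    have m_i2: "m \<noteq> i2" using m i2 by (auto simp: I1_def I0_def)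
    obtain u where "f (y - (y $ m) *\<^sub>R axis m 1 + u *\<^sub>R axis i2 1)
                      \<le> f y - \<bar>y $ m\<bar> * (\<bar>G y $ i2\<bar> - \<bar>G y $ m\<bar> - L * \<bar>y $ m\<bar>)"
      using swap_step_decrease[OF grad bl[OF m_i2] m_i2] by blast
    moreover have "f y' \<le> f (y - (y $ m) *\<^sub>R axis m 1 + u *\<^sub>R axis i2 1)"
      using y'_le2 best2 order_trans by blast
    moreover have "(MAX i\<in>I0 y. \<bar>G y $ i\<bar>) \<le> \<bar>G y $ i2\<bar>"
      using i2 i2_max by (intro Max.boundedI) auto
    moreover have "\<bar>G y $ m\<bar> \<le> (MAX i\<in>I1 y. \<bar>G y $ i\<bar>)"
      using m by (intro Max_ge) auto
    ultimately show ?thesis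
      unfolding Ms_eq_min_abs_on_support[OF at s m m_min]
      by (smt (verit) abs_ge_zero mult_left_mono)
  qed
  ultimately show ?thesis by simp
qed

theorem lemma4p1:
  fixes f :: "real^'n \<Rightarrow> real" and G :: "real^'n \<Rightarrow> real^'n"
    and s :: nat and L2 :: real and x :: "nat \<Rightarrow> real^'n" and K k :: nat
  assumes grad: "\<And>y. (f has_derivative (\<lambda>h. G y \<bullet> h)) (at y)"
    and C1: "continuous_on UNIV G"
    and bdd: "\<exists>c. \<forall>y. c \<le> f y"
    and lip: "\<exists>L. \<forall>y z. norm (G y - G z) \<le> L * norm (y - z)"
    and L2: "\<And>i j. i \<noteq> j \<Longrightarrow> block_lipschitz G i j L2"
    and attained: "\<And>y i. \<exists>t. \<forall>u. f (y + t *\<^sub>R axis i 1) \<le> f (y + u *\<^sub>R axis i 1)"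
    and s_pos: "0 < s" and s_lt: "s < CARD('n)"
    and x0: "l0norm (x 0) \<le> s"
    and steps: "\<And>j. j < K \<Longrightarrow> pss_step f G s (x j) (x (Suc j))"
    and k: "k < K"
  shows "(l0norm (x k) < s \<longrightarrow>
            f (x k) - f (x (Suc k)) \<ge> 1 / (2 * L2) * (MAX i\<in>UNIV. (G (x k) $ i)\<^sup>2))
       \<and> (l0norm (x k) = s \<longrightarrow>
            f (x k) - f (x (Suc k)) \<ge>
              max (1 / (2 * L2) * (MAX i\<in>I1 (x k). (G (x k) $ i)\<^sup>2))
                  (Ms s (x k) * ((MAX i\<in>I0 (x k). \<bar>G (x k) $ i\<bar>) - (MAX i\<in>I1 (x k). \<bar>G (x k) $ i\<bar>)
                                  - L2 * Ms s (x k))))"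
proof -
  have card: "2 \<le> CARD('n)" using s_pos s_lt by linarith
  show ?thesis
    using pss_step_decrease_below_sparsity[OF grad L2 card steps[OF k]]
      pss_step_decrease_at_sparsity[OF grad L2 card s_pos steps[OF k]]
    by blast
qed

end
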